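(* Let $q$ be a prime power and $1\le s<t\le k$ integers. There exists a linear AOA$(s,t,k,q)$ if and only if there exists a linear MDS code $C$ of length $k$ and dimension $t$ over $\mathbb{F}_q$ which contains a linear MDS code $C'\subseteq C$ of length $k$ and dimension $s$ over $\mathbb{F}_q$.
   Context: An orthogonal array OA$(t,k,v)$ (with $1\le t\le k$) is a $v^t\times k$ array with entries from a set $X$ of size $v$ such that, for every choice of $t$ of its columns, each $t$-tuple in $X^t$ appears exactly once as a row of the corresponding $v^t\times t$ subarray. For integers $1\le s\le t\le k$, an augmented orthogonal array AOA$(s,t,k,v)$ is a $v^t\times(k+1)$ array $A$ such that: (1) the first $k$ columns of $A$ form an OA$(t,k,v)$ on a symbol set $X$ of size $v$; (2) the last column of $A$ has entries from a set $Y$ of size $v^{t-s}$; (3) for any choice of $s$ of the first $k$ columns, these $s$ columns together with the last column contain every $(s+1)$-tuple of $X^s\times Y$ exactly once as a row. For a prime power $q$, an OA$(t,k,q)$ over $\mathbb{F}_q$ is linear if its set of rows is a $t$-dimensional $\mathbb{F}_q$-subspace of $\mathbb{F}_q^k$; an AOA$(s,t,k,q)$ is linear if $X=\mathbb{F}_q$, $Y=\mathbb{F}_q^{t-s}$, and its set of rows, regarded as vectors in $\mathbb{F}_q^{k}\times\mathbb{F}_q^{t-s}=\mathbb{F}_q^{k+t-s}$, is an $\mathbb{F}_q$-linear subspace. A linear code of length $k$ and dimension $t$ over $\mathbb{F}_q$ is a $t$-dimensional subspace of $\mathbb{F}_q^k$; it is MDS (maximum distance separable) if its minimum Hamming distance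 is $k-t+1$ (equivalently, any $t$ columns of a $t\times k$ generator matrix are linearly independent). *)

theory Defs
  imports Complex_Main "HOL-Library.Function_Algebras" "HOL-Library.FuncSet"
begin

text \<open>Vectors of \<open>F_q^n\<close> are modelled as functions \<open>nat \<Rightarrow> 'a\<close> that vanish outside \<open>{0..<n}\<close>;
  coordinate \<open>i\<close> is column \<open>i\<close>.\<close>

definition fscale :: "'a::field \<Rightarrow> (nat \<Rightarrow> 'a) \<Rightarrow> (nat \<Rightarrow> 'a)" where
  "fscale c v = (\<lambda>i. c * v i)"

interpretation fv: vector_space fscale
  by unfold_locales (auto simp: fscale_def algebra_simps fun_eq_iff)

definition vecs :: "nat \<Rightarrow> (nat \<Rightarrow> 'a::zero) set" where
  "vecs n = {v. \<forall>i\<ge>n. v i = 0}"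

definition linear_code :: "nat \<Rightarrow> nat \<Rightarrow> (nat \<Rightarrow> 'a::field) set \<Rightarrow> bool" where
  "linear_code k d C \<longleftrightarrow> C \<subseteq> vecs k \<and> fv.subspace C \<and> fv.dim C = d"

definition hamming_dist :: "nat \<Rightarrow> (nat \<Rightarrow> 'a) \<Rightarrow> (nat \<Rightarrow> 'a) \<Rightarrow> nat" where
  "hamming_dist k x y = card {i\<in>{0..<k}. x i \<noteq> y i}"

definition min_dist :: "nat \<Rightarrow> (nat \<Rightarrow> 'a) set \<Rightarrow> nat" where
  "min_dist k C = Min {hamming_dist k x y | x y. x \<in> C \<and> y \<in> C \<and> x \<noteq> y}"

definition MDS_code :: "nat \<Rightarrow> nat \<Rightarrow> (nat \<Rightarrow> 'a::field) set \<Rightarrow> bool" where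
  "MDS_code k d C \<longleftrightarrow> linear_code k d C \<and> min_dist k C = k - d + 1"

definition covers_once :: "(nat \<Rightarrow> 'a) set \<Rightarrow> nat set \<Rightarrow> bool" where
  "covers_once R J \<longleftrightarrow> bij_betw (\<lambda>r. restrict r J) R (J \<rightarrow>\<^sub>E (UNIV :: 'a set))"

text \<open>Linear AOA(s,t,k,q) over the finite field \<open>'a\<close>: rows live in \<open>F_q^{k+(t-s)}\<close>;
  columns \<open>0..<k\<close> are the first \<open>k\<close> columns, and coordinates \<open>k..<k+(t-s)\<close> together
  form the last column with values in \<open>Y = F_q^{t-s}\<close>.\<close>
definition linear_AOA :: "nat \<Rightarrow> nat \<Rightarrow> nat \<Rightarrow> (nat \<Rightarrow> 'a::field) set \<Rightarrow> bool" where
  "linear_AOA s t k R \<longleftrightarrow>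
     R \<subseteq> vecs (k + (t - s)) \<and> fv.subspace R \<and>
     (\<forall>J. J \<subseteq> {0..<k} \<and> card J = t \<longrightarrow> covers_once R J) \<and>
     (\<forall>J. J \<subseteq> {0..<k} \<and> card J = s \<longrightarrow> covers_once R (J \<union> {k..<k + (t - s)}))"

end

theory Submission
  imports Defs
begin

text \<open>A linear code of dimension \<open>d\<close> and length \<open>k\<close> is MDS exactly when every \<open>d\<close>
  coordinates form an information set, i.e. restriction to any \<open>d\<close> columns is a bijection
  onto \<open>F_q^d\<close>; this is the orthogonal-array property of the code viewed as an array of rows.
  Given a linear AOA, truncating the last column yields \<open>C\<close>, and truncating the rows whose last
  column vanishes yields \<open>C' \<subseteq> C\<close>. Conversely, given \<open>C' \<subseteq> C\<close>, let \<open>g\<close> be the linear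
  projection of \<open>C\<close> onto \<open>C'\<close> that keeps the first \<open>s\<close> coordinates, and use \<open>c - g c\<close> on the
  coordinates \<open>s..<t\<close> as the last column. Its kernel is \<open>C'\<close>, so a row vanishing on \<open>s\<close> columns
  and on the last column comes from a codeword of \<open>C'\<close> with \<open>s\<close> zeros, hence is zero.\<close>

lemma finite_vecs: "finite (vecs k :: (nat \<Rightarrow> 'a::{finite,zero}) set)"
proof -
  have eq: "vecs k = {v :: nat \<Rightarrow> 'a. \<forall>i. (i \<in> {0..<k} \<longrightarrow> v i \<in> UNIV) \<and> (i \<notin> {0..<k} \<longrightarrow> v i = 0)}"
    by (auto simp: vecs_def)
  show ?thesis unfolding eq by (rule finite_set_of_finite_funs) simp_all
qed

lemma one_less_card_field: "1 < card (UNIV :: 'a::{finite,field} set)"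
  using card_mono[of "UNIV :: 'a set" "{0, 1}"] by simp

lemma fscale_module_homI:
  assumes "\<And>x y. f (x + y) = f x + f y" and "\<And>c x. f (fscale c x) = fscale c (f x)"
  shows "module_hom fscale fscale f"
  using assms fv.module_axioms by (simp add: module_hom_iff)

lemma subspace_vanishing_on:
  assumes "fv.subspace S"
  shows "fv.subspace {r\<in>S. \<forall>i\<in>Y. r i = 0}"
  using assms by (auto simp: fv.subspace_def fscale_def)

lemma card_subspace:
  fixes S :: "(nat \<Rightarrow> 'a::{finite,field}) set"
  assumes fin: "finite S" and sub: "fv.subspace S"
  shows "card S = card (UNIV::'a set) ^ fv.dim S"
proof -
  obtain B where B: "B \<subseteq> S" "fv.independent B" "S \<subseteq> fv.span B" "card B = fv.dim S"
    by (rule fv.basis_exists)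
  have fB: "finite B" using B(1) fin finite_subset by blast
  define E where "E = (\<lambda>u. \<Sum>v\<in>B. fscale (u v) v)"
  have "bij_betw E (B \<rightarrow>\<^sub>E (UNIV::'a set)) S"
  proof (rule bij_betwI')
    fix u w assume u: "u \<in> B \<rightarrow>\<^sub>E (UNIV::'a set)" and w: "w \<in> B \<rightarrow>\<^sub>E (UNIV::'a set)"
    show "E u = E w \<longleftrightarrow> u = w"
    proof
      assume "E u = E w"
      then have "(\<Sum>v\<in>B. fscale (u v - w v) v) = 0"
        unfolding E_def by (simp add: fv.scale_left_diff_distrib sum_subtractf)
      then have "\<forall>v\<in>B. u v - w v = 0"
        using B(2) unfolding fv.dependent_finite[OF fB] by (auto dest: spec[of _ "\<lambda>v. u v - w v"])
      then show "u = w" using u w by (intro PiE_ext) auto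
    qed simp
  next
    fix u assume "u \<in> B \<rightarrow>\<^sub>E (UNIV::'a set)"
    then show "E u \<in> S" unfolding E_def
      using B(1) by (auto intro!: fv.subspace_sum[OF sub] fv.subspace_scale[OF sub])
  next
    fix x assume "x \<in> S"
    then obtain u where "x = (\<Sum>v\<in>B. fscale (u v) v)"
      using fv.span_subspace[OF B(1,3) sub] fv.span_finite[OF fB] by auto
    then have "x = E (restrict u B)" unfolding E_def by (auto intro: sum.cong)
    then show "\<exists>u\<in>B \<rightarrow>\<^sub>E UNIV. x = E u" by auto
  qed
  then have "card S = card (B \<rightarrow>\<^sub>E (UNIV::'a set))" by (simp add: bij_betw_same_card)
  then show ?thesis using B(4) by (simp add: card_PiE[OF fB])
qed

lemma covers_once_card:
  fixes R :: "(nat \<Rightarrow> 'a::finite) set"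
  assumes "covers_once R J" and "finite J"
  shows "card R = card (UNIV :: 'a set) ^ card J"
proof -
  have "card R = card (J \<rightarrow>\<^sub>E (UNIV :: 'a set))"
    using assms(1) unfolding covers_once_def by (rule bij_betw_same_card)
  then show ?thesis using assms(2) by (simp add: card_PiE)
qed

lemma covers_once_iff_inj_on:
  fixes R :: "(nat \<Rightarrow> 'a::finite) set"
  assumes "finite R" and "finite J" and "card R = card (UNIV :: 'a set) ^ card J"
  shows "covers_once R J \<longleftrightarrow> inj_on (\<lambda>r. restrict r J) R"
proof
  assume inj: "inj_on (\<lambda>r. restrict r J) R"
  have "card ((\<lambda>r. restrict r J) ` R) = card (J \<rightarrow>\<^sub>E (UNIV :: 'a set))"
    using inj assms by (simp add: card_image card_PiE)
  then have "(\<lambda>r. restrict r J) ` R = J \<rightarrow>\<^sub>E UNIV"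
    using assms(2) by (intro card_subset_eq) (auto simp: finite_PiE)
  then show "covers_once R J" using inj by (simp add: covers_once_def bij_betw_def)
qed (simp add: covers_once_def bij_betw_def)

lemma restrict_eq_restrict_iff: "restrict u J = restrict v J \<longleftrightarrow> (\<forall>i\<in>J. u i = v i)"
  by (auto simp: fun_eq_iff restrict_def)

lemma covers_once_interpolates:
  assumes "covers_once R J"
  shows "\<exists>r\<in>R. \<forall>i\<in>J. r i = v i"
proof -
  have "(\<lambda>r. restrict r J) ` R = J \<rightarrow>\<^sub>E UNIV"
    using assms by (simp add: covers_once_def bij_betw_def)
  then have "restrict v J \<in> (\<lambda>r. restrict r J) ` R" by simp
  then obtain r where "r \<in> R" "restrict v J = restrict r J" by (rule imageE)
  then show ?thesis by (auto simp: restrict_eq_restrict_iff)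
qed

lemma inj_on_restrict_iff_vanishing:
  assumes "fv.subspace S"
  shows "inj_on (\<lambda>r. restrict r J) S \<longleftrightarrow> (\<forall>x\<in>S. (\<forall>i\<in>J. x i = 0) \<longrightarrow> x = 0)"
proof
  assume inj: "inj_on (\<lambda>r. restrict r J) S"
  show "\<forall>x\<in>S. (\<forall>i\<in>J. x i = 0) \<longrightarrow> x = 0"
  proof (intro ballI impI)
    fix x assume "x \<in> S" "\<forall>i\<in>J. x i = 0"
    then have "restrict x J = restrict 0 J" by (simp add: restrict_eq_restrict_iff)
    then show "x = 0" using inj_onD[OF inj _ \<open>x \<in> S\<close> fv.subspace_0[OF assms]] by blast
  qed
next
  assume zero: "\<forall>x\<in>S. (\<forall>i\<in>J. x i = 0) \<longrightarrow> x = 0"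
  show "inj_on (\<lambda>r. restrict r J) S"
  proof (rule inj_onI)
    fix x y assume "x \<in> S" "y \<in> S" "restrict x J = restrict y J"
    then have "x - y \<in> S" "\<forall>i\<in>J. (x - y) i = 0"
      using fv.subspace_diff[OF assms] by (simp_all add: restrict_eq_restrict_iff)
    then have "x - y = 0" using zero by blast
    then show "x = y" by simp
  qed
qed

lemma covers_once_inj_on_agreeing:
  assumes "covers_once A J" and "\<And>r i. r \<in> A \<Longrightarrow> i \<in> J \<Longrightarrow> h r i = r i"
  shows "inj_on h A"
proof (rule inj_onI)
  fix x y assume "x \<in> A" "y \<in> A" "h x = h y"
  then have "restrict x J = restrict y J"
    using assms(2) by (simp add: restrict_eq_restrict_iff) metis
  then show "x = y"
    using assms(1) \<open>x \<in> A\<close> \<open>y \<in> A\<close> by (simp add: covers_once_def bij_betw_def inj_on_def)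
qed

lemma covers_once_image:
  assumes "covers_once A J" and "\<And>r i. r \<in> A \<Longrightarrow> i \<in> J \<Longrightarrow> h r i = r i"
  shows "covers_once (h ` A) J"
proof -
  have "inj_on h A" using assms by (rule covers_once_inj_on_agreeing)
  then have "bij_betw h A (h ` A)" by (rule inj_on_imp_bij_betw)
  then have "covers_once (h ` A) J \<longleftrightarrow> bij_betw ((\<lambda>r. restrict r J) \<circ> h) A (J \<rightarrow>\<^sub>E UNIV)"
    unfolding covers_once_def by (rule bij_betw_comp_iff)
  also have "\<dots> \<longleftrightarrow> covers_once A J"
    unfolding covers_once_def using assms(2) by (intro bij_betw_cong) (simp add: restrict_eq_restrict_iff)
  finally show ?thesis using assms(1) by simp
qed

lemma covers_once_vanishing_on:
  fixes R :: "(nat \<Rightarrow> 'a::zero) set"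
  assumes cov: "covers_once R (J \<union> Y)" and disj: "J \<inter> Y = {}"
  shows "covers_once {r\<in>R. \<forall>i\<in>Y. r i = 0} J"
  unfolding covers_once_def bij_betw_def
proof
  have inj: "inj_on (\<lambda>r. restrict r (J \<union> Y)) R"
    using cov by (simp add: covers_once_def bij_betw_def)
  show "inj_on (\<lambda>r. restrict r J) {r\<in>R. \<forall>i\<in>Y. r i = 0}"
  proof (rule inj_onI)
    fix x y assume "x \<in> {r\<in>R. \<forall>i\<in>Y. r i = 0}" "y \<in> {r\<in>R. \<forall>i\<in>Y. r i = 0}"
      and "restrict x J = restrict y J"
    then have "restrict x (J \<union> Y) = restrict y (J \<union> Y)" and "x \<in> R" "y \<in> R"
      by (auto simp: restrict_eq_restrict_iff)
    then show "x = y" using inj by (simp add: inj_on_def)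
  qed
  show "(\<lambda>r. restrict r J) ` {r\<in>R. \<forall>i\<in>Y. r i = 0} = J \<rightarrow>\<^sub>E UNIV"
  proof (intro equalityI subsetI)
    fix f :: "nat \<Rightarrow> 'a" assume "f \<in> J \<rightarrow>\<^sub>E UNIV"
    obtain r where "r \<in> R" and r: "\<And>i. i \<in> J \<union> Y \<Longrightarrow> r i = (if i \<in> J then f i else 0)"
      using covers_once_interpolates[OF cov, of "\<lambda>i. if i \<in> J then f i else 0"] by auto
    have "r \<in> {r\<in>R. \<forall>i\<in>Y. r i = 0}" using \<open>r \<in> R\<close> r disj by auto
    moreover have "restrict r J = f"
      using r \<open>f \<in> J \<rightarrow>\<^sub>E UNIV\<close> by (intro PiE_ext[of _ J "\<lambda>_. UNIV"]) auto
    ultimately show "f \<in> (\<lambda>r. restrict r J) ` {r\<in>R. \<forall>i\<in>Y. r i = 0}"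
      by (intro image_eqI[where x = r]) simp_all
  qed auto
qed

lemma subspace_covers_onceI:
  fixes S :: "(nat \<Rightarrow> 'a::{finite,field}) set"
  assumes "fv.subspace S" and "finite S" and "finite J"
    and "card S = card (UNIV :: 'a set) ^ card J"
    and "\<And>x. x \<in> S \<Longrightarrow> \<forall>i\<in>J. x i = 0 \<Longrightarrow> x = 0"
  shows "covers_once S J"
  using assms by (simp add: covers_once_iff_inj_on inj_on_restrict_iff_vanishing)

lemma hamming_dist_le_length: "hamming_dist k x y \<le> k"
  unfolding hamming_dist_def by (rule order_trans[OF card_mono[of "{0..<k}"]]) auto

lemma hamming_dist_le_if_agree:
  assumes "J \<subseteq> {0..<k}" and "\<forall>i\<in>J. x i = y i"
  shows "hamming_dist k x y \<le> k - card J"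
proof -
  have "hamming_dist k x y \<le> card ({0..<k} - J)"
    unfolding hamming_dist_def using assms(2) by (intro card_mono) auto
  also have "\<dots> = k - card J"
    using assms(1) by (simp add: card_Diff_subset finite_subset)
  finally show ?thesis .
qed

lemma agreement_set_exists:
  assumes "hamming_dist k x y + d \<le> k"
  obtains J where "J \<subseteq> {0..<k}" and "card J = d" and "\<forall>i\<in>J. x i = y i"
proof -
  let ?Z = "{i\<in>{0..<k}. x i = y i}"
  have "?Z = {0..<k} - {i\<in>{0..<k}. x i \<noteq> y i}" by auto
  also have "card \<dots> = card {0..<k} - card {i\<in>{0..<k}. x i \<noteq> y i}"
    by (rule card_Diff_subset) auto
  finally have "card ?Z = k - hamming_dist k x y" by (simp add: hamming_dist_def)
  then have "d \<le> card ?Z" using assms by simp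
  then obtain J where "J \<subseteq> ?Z" and "card J = d" by (rule obtain_subset_with_card_n)
  then show ?thesis by (intro that) auto
qed

lemma finite_distances: "finite {hamming_dist k x y | x y. x \<in> C \<and> y \<in> C \<and> x \<noteq> y}"
  by (rule finite_subset[of _ "{0..k}"]) (auto simp: hamming_dist_le_length)

lemma min_dist_le:
  assumes "x \<in> C" and "y \<in> C" and "x \<noteq> y"
  shows "min_dist k C \<le> hamming_dist k x y"
  unfolding min_dist_def using assms by (intro Min_le[OF finite_distances]) blast

lemma min_dist_eqI:
  assumes "\<And>x y. x \<in> C \<Longrightarrow> y \<in> C \<Longrightarrow> x \<noteq> y \<Longrightarrow> m \<le> hamming_dist k x y"
    and "x \<in> C" and "y \<in> C" and "x \<noteq> y" and "hamming_dist k x y \<le> m"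
  shows "min_dist k C = m"
proof (rule antisym)
  show "min_dist k C \<le> m" using min_dist_le[OF assms(2-4), of k] assms(5) by simp
  show "m \<le> min_dist k C"
    unfolding min_dist_def using assms(1-4) by (intro Min.boundedI[OF finite_distances]) auto
qed

lemma MDS_code_covers_once:
  fixes S :: "(nat \<Rightarrow> 'a::{finite,field}) set"
  assumes "MDS_code k d S" and J: "J \<subseteq> {0..<k}" "card J = d"
  shows "covers_once S J"
proof (rule subspace_covers_onceI)
  have Sv: "S \<subseteq> vecs k" and dim: "fv.dim S = d" and md: "min_dist k S = k - d + 1"
    and sub: "fv.subspace S"
    using assms(1) by (auto simp: MDS_code_def linear_code_def)
  show "fv.subspace S" by (fact sub)
  show fin: "finite S" using Sv finite_vecs by (rule finite_subset)
  show "finite J" using J(1) by (rule finite_subset) simp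
  show "card S = card (UNIV :: 'a set) ^ card J"
    using card_subspace[OF fin sub] dim J(2) by simp
  fix x assume "x \<in> S" and "\<forall>i\<in>J. x i = 0"
  then have "hamming_dist k x 0 \<le> k - d"
    using hamming_dist_le_if_agree[OF J(1), of x 0] J(2) by simp
  then show "x = 0"
    using min_dist_le[OF \<open>x \<in> S\<close> fv.subspace_0[OF sub], of k] md by fastforce
qed

lemma MDS_codeI:
  fixes S :: "(nat \<Rightarrow> 'a::{finite,field}) set"
  assumes "1 \<le> d" and "d \<le> k" and Sv: "S \<subseteq> vecs k" and sub: "fv.subspace S"
    and cov: "\<And>J. J \<subseteq> {0..<k} \<Longrightarrow> card J = d \<Longrightarrow> covers_once S J"
  shows "MDS_code k d S"
proof -
  have fin: "finite S" using Sv finite_vecs by (rule finite_subset)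
  have J0: "{0..<d} \<subseteq> {0..<k}" "card {0..<d} = d" using assms(2) by auto
  have "card (UNIV :: 'a set) ^ fv.dim S = card (UNIV :: 'a set) ^ d"
    using card_subspace[OF fin sub] covers_once_card[OF cov[OF J0]] by simp
  then have dim: "fv.dim S = d" using power_inject_exp[OF one_less_card_field[where 'a = 'a]] by simp
  have far: "k - d + 1 \<le> hamming_dist k x y" if "x \<in> S" "y \<in> S" "x \<noteq> y" for x y
  proof (rule ccontr)
    assume "\<not> ?thesis"
    then have "hamming_dist k x y + d \<le> k" using assms(2) by linarith
    then obtain J where J: "J \<subseteq> {0..<k}" "card J = d" "\<forall>i\<in>J. x i = y i"
      by (rule agreement_set_exists)
    then have "restrict x J = restrict y J" by (simp add: restrict_eq_restrict_iff)
    then show False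
      using cov[OF J(1,2)] that by (auto simp: covers_once_def bij_betw_def inj_on_def)
  qed
  obtain x where x: "x \<in> S" "\<forall>i\<in>{0..<d}. x i = (if i = d - 1 then 1 else 0)"
    using covers_once_interpolates[OF cov[OF J0], of "\<lambda>i. if i = d - 1 then 1 else 0"] by blast
  have "x \<noteq> 0" using bspec[OF x(2), of "d - 1"] assms(1) by auto
  moreover have "hamming_dist k x 0 \<le> k - d + 1"
  proof -
    have "\<forall>i\<in>{0..<d - 1}. x i = 0 i" using x(2) by auto
    then have "hamming_dist k x 0 \<le> k - card {0..<d - 1}"
      using assms(2) by (intro hamming_dist_le_if_agree) auto
    then show ?thesis using assms(1,2) by simp
  qed
  ultimately have "min_dist k S = k - d + 1"
    using far x(1) fv.subspace_0[OF sub] by (intro min_dist_eqI) auto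
  then show ?thesis using dim Sv sub by (simp add: MDS_code_def linear_code_def)
qed

lemma linear_AOA_imp_nested_MDS_codes:
  fixes R :: "(nat \<Rightarrow> 'a::{finite,field}) set"
  assumes "1 \<le> s" and "s < t" and "t \<le> k" and aoa: "linear_AOA s t k R"
  shows "\<exists>C C' :: (nat \<Rightarrow> 'a) set. MDS_code k t C \<and> MDS_code k s C' \<and> C' \<subseteq> C"
proof -
  define Y where "Y = {k..<k + (t - s)}"
  define R' where "R' = {r\<in>R. \<forall>i\<in>Y. r i = 0}"
  define p :: "(nat \<Rightarrow> 'a) \<Rightarrow> nat \<Rightarrow> 'a" where "p r i = (if i < k then r i else 0)" for r i
  have subR: "fv.subspace R"
    and covt: "\<And>J. J \<subseteq> {0..<k} \<Longrightarrow> card J = t \<Longrightarrow> covers_once R J"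
    and covs: "\<And>J. J \<subseteq> {0..<k} \<Longrightarrow> card J = s \<Longrightarrow> covers_once R (J \<union> Y)"
    using aoa by (auto simp: linear_AOA_def Y_def)
  have hom: "module_hom fscale fscale p"
    by (rule fscale_module_homI) (auto simp: p_def fscale_def)
  have p_vecs: "p ` A \<subseteq> vecs k" for A by (auto simp: p_def vecs_def)
  have covers_p: "covers_once (p ` A) J" if "covers_once A J" "J \<subseteq> {0..<k}" for A J
    using that(1) by (rule covers_once_image) (use that(2) in \<open>auto simp: p_def\<close>)
  have "MDS_code k t (p ` R)"
  proof (rule MDS_codeI)
    show "fv.subspace (p ` R)" using hom subR by (rule module_hom.subspace_image)
    show "covers_once (p ` R) J" if "J \<subseteq> {0..<k}" "card J = t" for J
      using covt[OF that] that(1) by (rule covers_p)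
  qed (use assms p_vecs in auto)
  moreover have "MDS_code k s (p ` R')"
  proof (rule MDS_codeI)
    show "fv.subspace (p ` R')"
      unfolding R'_def by (intro module_hom.subspace_image[OF hom] subspace_vanishing_on subR)
    fix J assume J: "J \<subseteq> {0..<k}" "card J = s"
    then have "J \<inter> Y = {}" by (auto simp: Y_def)
    then show "covers_once (p ` R') J"
      unfolding R'_def using covs[OF J] J(1) by (intro covers_p covers_once_vanishing_on)
  qed (use assms p_vecs in auto)
  moreover have "p ` R' \<subseteq> p ` R" by (auto simp: R'_def)
  ultimately show ?thesis by blast
qed

lemma covers_once_linear_retraction:
  fixes C :: "(nat \<Rightarrow> 'a::field) set"
  assumes sub: "fv.subspace C" and cov: "covers_once C J"
  obtains g where "module_hom fscale fscale g" and "\<And>c. g c \<in> C"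
    and "\<And>c i. i \<in> J \<Longrightarrow> g c i = c i"
proof -
  have unique: "x = y" if "x \<in> C" "y \<in> C" "\<forall>i\<in>J. x i = y i" for x y
    using cov that by (auto simp: covers_once_def bij_betw_def inj_on_def restrict_eq_restrict_iff)
  define g where "g c = (SOME x. x \<in> C \<and> (\<forall>i\<in>J. x i = c i))" for c
  have "\<exists>x. x \<in> C \<and> (\<forall>i\<in>J. x i = c i)" for c
    using covers_once_interpolates[OF cov, of c] by blast
  then have g: "g c \<in> C \<and> (\<forall>i\<in>J. g c i = c i)" for c
    unfolding g_def by (rule someI_ex)
  have "module_hom fscale fscale g"
  proof (rule fscale_module_homI)
    fix x y :: "nat \<Rightarrow> 'a"
    show "g (x + y) = g x + g y"
      using g[of x] g[of y] g[of "x + y"] fv.subspace_add[OF sub] by (intro unique) auto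
    fix c
    show "g (fscale c x) = fscale c (g x)"
      using g[of x] g[of "fscale c x"] fv.subspace_scale[OF sub]
      by (intro unique) (auto simp: fscale_def)
  qed
  then show ?thesis by (rule that) (simp_all add: g)
qed

lemma mem_subcode_if_agrees_with_retraction:
  fixes C C' :: "(nat \<Rightarrow> 'a::field) set"
  assumes sub: "fv.subspace C" and "C' \<subseteq> C" and cov: "covers_once C {0..<t}"
    and g_in: "\<And>c. g c \<in> C'" and g_low: "\<And>c i. i < s \<Longrightarrow> g c i = c i"
    and "c \<in> C" and agree: "\<And>i. s \<le> i \<Longrightarrow> i < t \<Longrightarrow> g c i = c i"
  shows "c \<in> C'"
proof -
  have "c - g c \<in> C" using assms(2,6) g_in by (blast intro: fv.subspace_diff[OF sub])
  moreover have "\<forall>i\<in>{0..<t}. (c - g c) i = 0"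
  proof
    fix i assume "i \<in> {0..<t}"
    then show "(c - g c) i = 0" using g_low[of i c] agree[of i] by (cases "i < s") auto
  qed
  moreover have "inj_on (\<lambda>r. restrict r {0..<t}) C"
    using cov by (simp add: covers_once_def bij_betw_def)
  ultimately have "c - g c = 0" using inj_on_restrict_iff_vanishing[OF sub] by blast
  then show ?thesis using g_in[of c] by simp
qed

lemma linear_AOA_extension:
  fixes C :: "(nat \<Rightarrow> 'a::{finite,field}) set"
  assumes "s \<le> t" and "t \<le> k" and MC: "MDS_code k t C" and hom: "module_hom fscale fscale L"
    and L_supp: "\<And>c i. i \<notin> {k..<k + (t - s)} \<Longrightarrow> L c i = 0"
    and kernel: "\<And>c J. c \<in> C \<Longrightarrow> J \<subseteq> {0..<k} \<Longrightarrow> card J = s \<Longrightarrow> \<forall>i\<in>J. c i = 0 \<Longrightarrow>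
      \<forall>i\<in>{k..<k + (t - s)}. L c i = 0 \<Longrightarrow> c = 0"
  shows "linear_AOA s t k ((\<lambda>c. c + L c) ` C)"
proof -
  define Y where "Y = {k..<k + (t - s)}"
  define R where "R = (\<lambda>c. c + L c) ` C"
  have Cv: "C \<subseteq> vecs k" and subC: "fv.subspace C"
    using MC by (auto simp: MDS_code_def linear_code_def)
  have covt: "covers_once C J" if "J \<subseteq> {0..<k}" "card J = t" for J
    using MC that by (rule MDS_code_covers_once)
  have low: "(c + L c) i = c i" if "i < k" for c i using that L_supp by simp
  have high: "(c + L c) i = L c i" if "c \<in> C" "k \<le> i" for c i
    using that Cv by (auto simp: vecs_def)
  have "module_hom fscale fscale (\<lambda>c. c + L c)"
    using module_hom.add[OF hom] module_hom.scale[OF hom]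
    by (intro fscale_module_homI) (simp_all add: fscale_def fun_eq_iff algebra_simps)
  then have subR: "fv.subspace R" unfolding R_def using subC by (rule module_hom.subspace_image)
  have covRt: "covers_once R J" if "J \<subseteq> {0..<k}" "card J = t" for J
    unfolding R_def using covt[OF that] by (rule covers_once_image) (use that low in auto)
  have covRs: "covers_once R (J \<union> Y)" if J: "J \<subseteq> {0..<k}" "card J = s" for J
  proof (rule subspace_covers_onceI[OF subR])
    have T: "{0..<t} \<subseteq> {0..<k}" "card {0..<t} = t" using assms(2) by auto
    have "finite C" using Cv finite_vecs by (rule finite_subset)
    then show "finite R" by (simp add: R_def)
    have "inj_on (\<lambda>c. c + L c) C"
      using covt[OF T] by (rule covers_once_inj_on_agreeing) (use low assms(2) in auto)
    then have "card R = card (UNIV :: 'a set) ^ t"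
      using covers_once_card[OF covt[OF T]] by (simp add: R_def card_image)
    moreover have "card (J \<union> Y) = t"
      using J assms(1) by (subst card_Un_disjoint) (auto simp: Y_def intro: finite_subset)
    ultimately show "card R = card (UNIV :: 'a set) ^ card (J \<union> Y)" by simp
    show "finite (J \<union> Y)" using J(1) by (auto simp: Y_def intro: finite_subset)
    fix x assume "x \<in> R" and van: "\<forall>i\<in>J \<union> Y. x i = 0"
    then obtain c where c: "c \<in> C" "x = c + L c" by (auto simp: R_def)
    have "\<forall>i\<in>J. c i = 0"
    proof
      fix i assume "i \<in> J"
      then show "c i = 0" using van J(1) low[of i c] c(2) by auto
    qed
    moreover have "\<forall>i\<in>Y. L c i = 0"
    proof
      fix i assume "i \<in> Y"
      then have "x i = 0" and "k \<le> i" using van by (auto simp: Y_def)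
      then show "L c i = 0" using high[OF c(1)] c(2) by simp
    qed
    ultimately have "c = 0" using kernel[OF c(1) J] by (simp add: Y_def)
    then show "x = 0" using c(2) module_hom.zero[OF hom] by simp
  qed
  have "R \<subseteq> vecs (k + (t - s))" using Cv L_supp by (auto simp: R_def vecs_def)
  then show ?thesis using subR covRt covRs by (simp add: linear_AOA_def R_def Y_def)
qed

lemma nested_MDS_codes_imp_linear_AOA:
  fixes C C' :: "(nat \<Rightarrow> 'a::{finite,field}) set"
  assumes "1 \<le> s" and "s < t" and "t \<le> k"
    and MC: "MDS_code k t C" and MC': "MDS_code k s C'" and "C' \<subseteq> C"
  shows "\<exists>R :: (nat \<Rightarrow> 'a) set. linear_AOA s t k R"
proof -
  have subC: "fv.subspace C" and subC': "fv.subspace C'"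
    using MC MC' by (auto simp: MDS_code_def linear_code_def)
  have covs: "covers_once C' J" if "J \<subseteq> {0..<k}" "card J = s" for J
    using MC' that by (rule MDS_code_covers_once)
  have covt: "covers_once C {0..<t}" using MC assms(3) by (intro MDS_code_covers_once) auto
  obtain g where hom_g: "module_hom fscale fscale g" and g_in: "\<And>c. g c \<in> C'"
    and g_low: "\<And>c i. i < s \<Longrightarrow> g c i = c i"
    using covers_once_linear_retraction[OF subC' covs[of "{0..<s}"]] assms(2,3) by auto
  define L where "L c i = (if i \<in> {k..<k + (t - s)} then (c - g c) (s + (i - k)) else 0)" for c i
  have hom_L: "module_hom fscale fscale L"
  proof (rule fscale_module_homI)
    show "L (x + y) = L x + L y" for x y
      using module_hom.add[OF hom_g, of x y] by (auto simp: L_def fun_eq_iff)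
    show "L (fscale a x) = fscale a (L x)" for a x
      using module_hom.scale[OF hom_g, of a x]
      by (auto simp: L_def fscale_def fun_eq_iff algebra_simps)
  qed
  have L_supp: "L c i = 0" if "i \<notin> {k..<k + (t - s)}" for c i
    unfolding L_def by (rule if_not_P[OF that])
  have kernel: "c = 0"
    if c: "c \<in> C" and J: "J \<subseteq> {0..<k}" "card J = s" "\<forall>i\<in>J. c i = 0"
      and van: "\<forall>i\<in>{k..<k + (t - s)}. L c i = 0" for c J
  proof -
    have "g c i = c i" if "s \<le> i" "i < t" for i
    proof -
      have "k + (i - s) \<in> {k..<k + (t - s)}" using that by auto
      then have "L c (k + (i - s)) = (c - g c) i" unfolding L_def using that by simp
      then show ?thesis using van \<open>k + (i - s) \<in> {k..<k + (t - s)}\<close> by simp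
    qed
    then have "c \<in> C'"
      using mem_subcode_if_agrees_with_retraction[where g = g,
          OF subC \<open>C' \<subseteq> C\<close> covt g_in g_low c] by blast
    then show "c = 0"
      using J covs[OF J(1,2)] inj_on_restrict_iff_vanishing[OF subC']
      by (simp add: covers_once_def bij_betw_def)
  qed
  have "linear_AOA s t k ((\<lambda>c. c + L c) ` C)"
    using less_imp_le[OF assms(2)] assms(3) MC hom_L L_supp kernel by (rule linear_AOA_extension)
  then show ?thesis ..
qed

theorem theorem3p3:
  fixes s t k :: nat
  assumes "1 \<le> s" and "s < t" and "t \<le> k"
  shows "(\<exists>R :: (nat \<Rightarrow> 'a::{finite,field}) set. linear_AOA s t k R) \<longleftrightarrow>
         (\<exists>C C' :: (nat \<Rightarrow> 'a) set. MDS_code k t C \<and> MDS_code k s C' \<and> C' \<subseteq> C)"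
proof
  assume "\<exists>R :: (nat \<Rightarrow> 'a) set. linear_AOA s t k R"
  then obtain R :: "(nat \<Rightarrow> 'a) set" where "linear_AOA s t k R" ..
  then show "\<exists>C C' :: (nat \<Rightarrow> 'a) set. MDS_code k t C \<and> MDS_code k s C' \<and> C' \<subseteq> C"
    by (rule linear_AOA_imp_nested_MDS_codes[OF assms])
next
  assume "\<exists>C C' :: (nat \<Rightarrow> 'a) set. MDS_code k t C \<and> MDS_code k s C' \<and> C' \<subseteq> C"
  then obtain C C' :: "(nat \<Rightarrow> 'a) set"
    where "MDS_code k t C" and "MDS_code k s C'" and "C' \<subseteq> C" by blast
  then show "\<exists>R :: (nat \<Rightarrow> 'a) set. linear_AOA s t k R"
    by (rule nested_MDS_codes_imp_linear_AOA[OF assms])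
qed

end
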